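(* Under Assumption A(b),(c) in setting (E), let $\mathbf p\in(0,1]$, $b\ge1$, set $\widetilde S^{-1}:=Gx^0$ and for $k\ge0$ $$\widetilde S^k:=\begin{cases}\widetilde S^{k-1}+2G_{\mathcal B_k}x^k-3G_{\mathcal B_k}x^{k-1}+G_{\mathcal B_k}x^{k-2}&\text{with probability }1-\mathbf p,\\ \overline S^k&\text{with probability }\mathbf p,\end{cases}$$ where $\mathcal B_k$ is a fresh i.i.d. mini-batch of size $b$, and $\overline S^k$ satisfies $\mathbb E_k[\overline S^k]=S^k$ and $\mathbb E_k\|\overline S^k-S^k\|^2\le\sigma_k^2$ (e.g. $\overline S^k=S^k$ with $\sigma_k=0$, or a mega-batch average of $2\mathbf G(x^k,\zeta)-\mathbf G(x^{k-1},\zeta)$ of size $n_k$). Then $\widetilde S^k$ belongs to class (B) with $\Delta_k:=\|\widetilde S^k-S^k\|^2$, $\tau=\mathbf p$, $\kappa=\mathbf p$, $\Theta=\frac{8(1-\mathbf p)L^2}{b}$, $\hat\Theta=\frac{2(1-\mathbf p)L^2}{b}$, $\delta_k=\mathbf p\sigma_k^2$.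
   Context: Setting: $G:\mathbb{R}^p\to\mathbb{R}^p$, $T:\mathbb{R}^p\rightrightarrows\mathbb{R}^p$, $\Phi:=G+T$, $\mathrm{zer}\,\Phi:=\{x:0\in Gx+Tx\}$, $J_{\eta T}:=(\mathbb{I}+\eta T)^{-1}$. (E): $Gx=\mathbb{E}_{\zeta\sim\mathbb P}[\mathbf G(x,\zeta)]$; (F) $Gx=\frac1n\sum_iG_ix$ is the special case with $\zeta$ uniform on $\{1,\dots,n\}$. $G_{\mathcal B}x:=\frac1{|\mathcal B|}\sum_{\zeta\in\mathcal B}\mathbf G(x,\zeta)$; an i.i.d. mini-batch of size $b$ is $b$ samples drawn i.i.d. from $\mathbb P$ independently of the past. Assumption A: (b) $\mathbb{E}_\zeta\|\mathbf G(x,\zeta)-Gx\|^2\le\sigma^2$ for all $x$; (c) $\mathbb{E}_\zeta\|\mathbf G(x,\zeta)-\mathbf G(y,\zeta)\|^2\le L^2\|x-y\|^2$ for all $x,y$. Scheme (VrFRBS): stepsize $\eta>0$, $x^0$, $x^{-2}=x^{-1}=x^0$, $\xi^0\in Tx^0$; for $k\ge0$: $S^k:=2Gx^k-Gx^{k-1}$, estimator $\widetilde S^k$, $x^{k+1}\in J_{\eta T}(x^k-\eta\widetilde S^k)$, $\xi^{k+1}:=\eta^{-1}(x^k-\eta\widetilde S^k-x^{k+1})\in Tx^{k+1}$; $e^k:=\widetilde S^k-S^k$ (so $e^{-1}=0$ with $S^{-1}:=Gx^0$). $\mathcal F_k$: $\sigma$-algebra of all randomness up to iteration $k$; $\mathbb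 E_k[\cdot]:=\mathbb E[\cdot\mid\mathcal F_k]$. Class (B) (biased variance-reduced): there exist nonnegative random variables $\Delta_k$ ($\Delta_{-1}:=0$), constants $\tau,\kappa\in(0,1]$, $\Theta,\hat\Theta\ge0$, nonnegative $\{\delta_k\}$, such that with $e^{-1}:=0$, a.s. for all $k\ge0$: $\mathbb E_k[e^k]=(1-\tau)e^{k-1}$; $\mathbb E_k\|e^k\|^2\le\mathbb E_k[\Delta_k]$; $\mathbb E_k[\Delta_k]\le(1-\kappa)\Delta_{k-1}+\Theta\|x^k-x^{k-1}\|^2+\hat\Theta\|x^{k-1}-x^{k-2}\|^2+\delta_k$. *)

theory Defs
  imports "HOL-Probability.Probability"
begin

definition batch_op :: "('e \<Rightarrow> 'z \<Rightarrow> 'e::real_vector) \<Rightarrow> nat \<Rightarrow> (nat \<Rightarrow> 'w \<Rightarrow> 'z) \<Rightarrow> 'e \<Rightarrow> 'w \<Rightarrow> 'e"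
  where "batch_op Gb b zk y \<omega> = (1 / real b) *\<^sub>R (\<Sum>j<b. Gb y (zk j \<omega>))"

text \<open>Iterates are indexed by nat; because of
  truncated subtraction  x (k-1), x (k-2)  for k = 0,1 equal  x 0, which matches the
  convention  x^{-2} = x^{-1} = x^0.  The event  C k  is the event of probability p
  on which the estimator is refreshed by  Sbar k.\<close>
definition vr_step :: "('e \<Rightarrow> 'z \<Rightarrow> 'e::real_vector) \<Rightarrow> nat \<Rightarrow> (nat \<Rightarrow> 'w \<Rightarrow> 'e) \<Rightarrow> (nat \<Rightarrow> 'w set)
    \<Rightarrow> (nat \<Rightarrow> nat \<Rightarrow> 'w \<Rightarrow> 'z) \<Rightarrow> (nat \<Rightarrow> 'w \<Rightarrow> 'e) \<Rightarrow> nat \<Rightarrow> 'e \<Rightarrow> 'w \<Rightarrow> 'e"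
  where "vr_step Gb b x C \<zeta> Sbar k prev \<omega> =
    (if \<omega> \<in> C k then Sbar k \<omega>
     else prev + 2 *\<^sub>R batch_op Gb b (\<zeta> k) (x k \<omega>) \<omega>
               - 3 *\<^sub>R batch_op Gb b (\<zeta> k) (x (k - 1) \<omega>) \<omega>
               + batch_op Gb b (\<zeta> k) (x (k - 2) \<omega>) \<omega>)"

primrec vr_est :: "('e \<Rightarrow> 'z \<Rightarrow> 'e::real_vector) \<Rightarrow> ('e \<Rightarrow> 'e) \<Rightarrow> nat \<Rightarrow> (nat \<Rightarrow> 'w \<Rightarrow> 'e)
    \<Rightarrow> (nat \<Rightarrow> 'w set) \<Rightarrow> (nat \<Rightarrow> nat \<Rightarrow> 'w \<Rightarrow> 'z) \<Rightarrow> (nat \<Rightarrow> 'w \<Rightarrow> 'e) \<Rightarrow> nat \<Rightarrow> 'w \<Rightarrow> 'e"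
  where
    "vr_est Gb G b x C \<zeta> Sbar 0 \<omega> = vr_step Gb b x C \<zeta> Sbar 0 (G (x 0 \<omega>)) \<omega>"
  | "vr_est Gb G b x C \<zeta> Sbar (Suc k) \<omega> = vr_step Gb b x C \<zeta> Sbar (Suc k) (vr_est Gb G b x C \<zeta> Sbar k \<omega>) \<omega>"

definition frb_S :: "('e \<Rightarrow> 'e::real_vector) \<Rightarrow> (nat \<Rightarrow> 'w \<Rightarrow> 'e) \<Rightarrow> nat \<Rightarrow> 'w \<Rightarrow> 'e"
  where "frb_S G x k \<omega> = 2 *\<^sub>R G (x k \<omega>) - G (x (k - 1) \<omega>)"

text \<open>Class (B) of biased variance-reduced estimators, with errors  e k  (k >= 0),
  e^{-1} := 0, Delta_{-1} := 0.  Conditional expectations E_k of vectors are taken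
  componentwise (real_cond_exp on each coordinate along Basis); conditional
  expectations of nonnegative quantities are nn_cond_exp.\<close>
definition classB :: "'w measure \<Rightarrow> (nat \<Rightarrow> 'w measure) \<Rightarrow> (nat \<Rightarrow> 'w \<Rightarrow> 'e::euclidean_space)
    \<Rightarrow> (nat \<Rightarrow> 'w \<Rightarrow> 'e) \<Rightarrow> (nat \<Rightarrow> 'w \<Rightarrow> real) \<Rightarrow> real \<Rightarrow> real \<Rightarrow> real \<Rightarrow> real \<Rightarrow> (nat \<Rightarrow> real) \<Rightarrow> bool"
  where "classB M F x e \<Delta> \<tau> \<kappa> \<Theta> \<Theta>h \<delta> \<longleftrightarrow>
    \<tau> \<in> {0<..1} \<and> \<kappa> \<in> {0<..1} \<and> \<Theta> \<ge> 0 \<and> \<Theta>h \<ge> 0 \<and> (\<forall>k. \<delta> k \<ge> 0) \<and>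
    (\<forall>k. \<Delta> k \<in> borel_measurable M) \<and> (\<forall>k. \<forall>\<omega>\<in>space M. \<Delta> k \<omega> \<ge> 0) \<and>
    (\<forall>k. \<forall>i\<in>Basis. AE \<omega> in M.
        real_cond_exp M (F k) (\<lambda>\<omega>. e k \<omega> \<bullet> i) \<omega>
          = (1 - \<tau>) * ((if k = 0 then 0 else e (k - 1) \<omega>) \<bullet> i)) \<and>
    (\<forall>k. AE \<omega> in M.
        nn_cond_exp M (F k) (\<lambda>\<omega>. ennreal ((norm (e k \<omega>))\<^sup>2)) \<omega>
          \<le> nn_cond_exp M (F k) (\<lambda>\<omega>. ennreal (\<Delta> k \<omega>)) \<omega>) \<and>
    (\<forall>k. AE \<omega> in M.
        nn_cond_exp M (F k) (\<lambda>\<omega>. ennreal (\<Delta> k \<omega>)) \<omega>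
          \<le> ennreal ((1 - \<kappa>) * (if k = 0 then 0 else \<Delta> (k - 1) \<omega>)
                     + \<Theta> * (norm (x k \<omega> - x (k - 1) \<omega>))\<^sup>2
                     + \<Theta>h * (norm (x (k - 1) \<omega> - x (k - 2) \<omega>))\<^sup>2 + \<delta> k))"

end

(* Write e_k for the error S~^k - S^k. On the refresh event C_k it equals Sbar^k - S^k, which is
   conditionally centred with conditional second moment at most sigma_k^2. Off C_k the update gives
   e_k = e_(k-1) + (1/b) sum_j W(zeta_(k,j)), where W is the centred one-sample version of
   2 G x^k - 3 G x^(k-1) + G x^(k-2). The mini-batch is independent of F_k, and the coin is
   independent of F_k, the batch and Sbar^k; so conditioning on F_k freezes the iterates and e_(k-1)
   and averages over the coin (weights p and 1 - p) and over the batch. As the b samples are i.i.d.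
   and centred, this yields E_k e_k = (1 - p) e_(k-1) and
   E_k |e_k|^2 <= p sigma_k^2 + (1 - p) (|e_(k-1)|^2 + E|W|^2 / b), and assumption A(c) bounds
   E|W|^2 by 8 L^2 |x^k - x^(k-1)|^2 + 2 L^2 |x^(k-1) - x^(k-2)|^2. *)

theory Submission
  imports Defs
begin

section \<open>Conditioning on independent randomness\<close>

lemma (in prob_space) distr_pair_eq_pair_measure_if_indep:
  assumes F: "subalgebra M F" and X[measurable]: "X \<in> measurable F N" and Y[measurable]: "Y \<in> measurable M P"
    and ind: "indep_set (sets F) {Y -` B \<inter> space M | B. B \<in> sets P}"
  shows "distr M N X \<Otimes>\<^sub>M distr M P Y = distr M (N \<Otimes>\<^sub>M P) (\<lambda>\<omega>. (X \<omega>, Y \<omega>))"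
proof -
  have XM[measurable]: "X \<in> measurable M N" by (rule measurable_from_subalg[OF F X])
  interpret DX: prob_space "distr M N X" by (rule prob_space_distr) simp
  interpret DY: prob_space "distr M P Y" by (rule prob_space_distr) simp
  have sF: "space F = space M" using F by (auto simp: subalgebra_def)
  show ?thesis
  proof (rule pair_measure_eqI)
    show "sigma_finite_measure (distr M N X)" "sigma_finite_measure (distr M P Y)" by unfold_locales
    show "sets (distr M N X \<Otimes>\<^sub>M distr M P Y) = sets (distr M (N \<Otimes>\<^sub>M P) (\<lambda>\<omega>. (X \<omega>, Y \<omega>)))"
      by (simp add: sets_pair_measure_cong[OF sets_distr sets_distr])
    fix A B assume "A \<in> sets (distr M N X)" and "B \<in> sets (distr M P Y)"
    then have A: "A \<in> sets N" and B: "B \<in> sets P" by auto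
    have XA: "X -` A \<inter> space M \<in> sets F" using measurable_sets[OF X A] sF by simp
    have YB: "Y -` B \<inter> space M \<in> {Y -` B \<inter> space M | B. B \<in> sets P}" using B by blast
    have "emeasure (distr M (N \<Otimes>\<^sub>M P) (\<lambda>\<omega>. (X \<omega>, Y \<omega>))) (A \<times> B)
        = emeasure M ((X -` A \<inter> space M) \<inter> (Y -` B \<inter> space M))"
      using A B by (subst emeasure_distr) (auto intro!: arg_cong[where f="emeasure M"])
    also have "\<dots> = ennreal (prob (X -` A \<inter> space M) * prob (Y -` B \<inter> space M))"
      using indep_setD[OF ind XA YB] by (simp add: emeasure_eq_measure)
    also have "\<dots> = emeasure (distr M N X) A * emeasure (distr M P Y) B"
      using A B by (simp add: emeasure_distr emeasure_eq_measure ennreal_mult)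
    finally show "emeasure (distr M N X) A * emeasure (distr M P Y) B
        = emeasure (distr M (N \<Otimes>\<^sub>M P) (\<lambda>\<omega>. (X \<omega>, Y \<omega>))) (A \<times> B)" by simp
  qed
qed

lemma (in prob_space) nn_integral_pair_if_indep:
  assumes F: "subalgebra M F" and X[measurable]: "X \<in> measurable F N" and Y[measurable]: "Y \<in> measurable M P"
    and ind: "indep_set (sets F) {Y -` B \<inter> space M | B. B \<in> sets P}"
    and f[measurable]: "f \<in> borel_measurable (N \<Otimes>\<^sub>M P)"
  shows "(\<integral>\<^sup>+\<omega>. f (X \<omega>, Y \<omega>) \<partial>M) = (\<integral>\<^sup>+\<omega>. (\<integral>\<^sup>+y. f (X \<omega>, y) \<partial>distr M P Y) \<partial>M)"
proof -
  have XM[measurable]: "X \<in> measurable M N" by (rule measurable_from_subalg[OF F X])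
  interpret DY: prob_space "distr M P Y" by (rule prob_space_distr) simp
  have frozen_meas: "(\<lambda>u. \<integral>\<^sup>+y. f (u, y) \<partial>distr M P Y) \<in> borel_measurable N"
    by (rule DY.borel_measurable_nn_integral)
       (simp add: measurable_cong_sets[OF sets_pair_measure_cong[OF refl sets_distr] refl])
  have "(\<integral>\<^sup>+\<omega>. f (X \<omega>, Y \<omega>) \<partial>M) = (\<integral>\<^sup>+z. f z \<partial>distr M (N \<Otimes>\<^sub>M P) (\<lambda>\<omega>. (X \<omega>, Y \<omega>)))"
    by (subst nn_integral_distr) auto
  also have "\<dots> = (\<integral>\<^sup>+z. f z \<partial>(distr M N X \<Otimes>\<^sub>M distr M P Y))"
    by (simp add: distr_pair_eq_pair_measure_if_indep[OF F X Y ind])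
  also have "\<dots> = (\<integral>\<^sup>+u. (\<integral>\<^sup>+y. f (u, y) \<partial>distr M P Y) \<partial>distr M N X)"
    by (rule DY.nn_integral_fst[symmetric])
       (simp add: measurable_cong_sets[OF sets_pair_measure_cong[OF sets_distr sets_distr] refl])
  also have "\<dots> = (\<integral>\<^sup>+\<omega>. (\<integral>\<^sup>+y. f (X \<omega>, y) \<partial>distr M P Y) \<partial>M)"
    using frozen_meas by (subst nn_integral_distr) auto
  finally show ?thesis .
qed

lemma (in prob_space) nn_cond_exp_freeze:
  assumes F: "subalgebra M F" and X[measurable]: "X \<in> measurable F N" and Y[measurable]: "Y \<in> measurable M P"
    and ind: "indep_set (sets F) {Y -` B \<inter> space M | B. B \<in> sets P}"
    and f[measurable]: "f \<in> borel_measurable (N \<Otimes>\<^sub>M P)"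
  shows "AE \<omega> in M. nn_cond_exp M F (\<lambda>\<omega>. f (X \<omega>, Y \<omega>)) \<omega> = (\<integral>\<^sup>+y. f (X \<omega>, y) \<partial>distr M P Y)"
proof -
  interpret finite_measure_subalgebra M F by unfold_locales (fact F)
  have XM[measurable]: "X \<in> measurable M N" by (rule measurable_from_subalg[OF F X])
  interpret DY: prob_space "distr M P Y" by (rule prob_space_distr) simp
  have "(\<lambda>u. \<integral>\<^sup>+y. f (u, y) \<partial>distr M P Y) \<in> borel_measurable N"
    by (rule DY.borel_measurable_nn_integral)
       (simp add: measurable_cong_sets[OF sets_pair_measure_cong[OF refl sets_distr] refl])
  then have frozen_meas: "(\<lambda>\<omega>. \<integral>\<^sup>+y. f (X \<omega>, y) \<partial>distr M P Y) \<in> borel_measurable F"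
    using measurable_comp[OF X] by (simp add: comp_def)
  have "AE \<omega> in M. (\<integral>\<^sup>+y. f (X \<omega>, y) \<partial>distr M P Y) = nn_cond_exp M F (\<lambda>\<omega>. f (X \<omega>, Y \<omega>)) \<omega>"
  proof (rule nn_cond_exp_charact)
    fix A assume A: "A \<in> sets F"
    \<comment> \<open>pair \<open>X\<close> with the indicator of \<open>A\<close>, which is again \<open>F\<close>-measurable\<close>
    define XA where "XA = (\<lambda>\<omega>. (X \<omega>, \<omega> \<in> A))"
    define fA where "fA = (\<lambda>z. if snd (fst z) then f (fst (fst z), snd z) else (0::ennreal))"
    have XA: "XA \<in> measurable F (N \<Otimes>\<^sub>M count_space UNIV)" unfolding XA_def using A by measurable
    have fA: "fA \<in> borel_measurable ((N \<Otimes>\<^sub>M count_space UNIV) \<Otimes>\<^sub>M P)" unfolding fA_def by measurable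
    have "(\<integral>\<^sup>+\<omega>\<in>A. f (X \<omega>, Y \<omega>) \<partial>M) = (\<integral>\<^sup>+\<omega>. fA (XA \<omega>, Y \<omega>) \<partial>M)"
      by (rule nn_integral_cong) (auto simp: XA_def fA_def indicator_def)
    also have "\<dots> = (\<integral>\<^sup>+\<omega>. (\<integral>\<^sup>+y. fA (XA \<omega>, y) \<partial>distr M P Y) \<partial>M)"
      by (rule nn_integral_pair_if_indep[OF F XA Y ind fA])
    also have "\<dots> = (\<integral>\<^sup>+\<omega>\<in>A. (\<integral>\<^sup>+y. f (X \<omega>, y) \<partial>distr M P Y) \<partial>M)"
      by (rule nn_integral_cong) (auto simp: XA_def fA_def indicator_def)
    finally show "(\<integral>\<^sup>+\<omega>\<in>A. f (X \<omega>, Y \<omega>) \<partial>M) = (\<integral>\<^sup>+\<omega>\<in>A. (\<integral>\<^sup>+y. f (X \<omega>, y) \<partial>distr M P Y) \<partial>M)" .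
  qed (use frozen_meas in auto)
  then show ?thesis by auto
qed

lemma (in prob_space) indep_set_indicator:
  assumes H: "subalgebra M H" and C: "C \<in> events" and ind: "indep_set {C} (sets H)"
  shows "indep_set (sets H) {(\<lambda>\<omega>. \<omega> \<in> C) -` B \<inter> space M | B. B \<in> sets (count_space UNIV)}"
proof -
  have sH: "space H = space M" using H by (auto simp: subalgebra_def)
  have CS: "{C} \<subseteq> Pow (space M)" using sets.sets_into_space[OF C] by auto
  have "indep_set (sigma_sets (space M) {C}) (sigma_sets (space M) (sets H))"
    by (rule indep_set_sigma_sets[OF ind]) (auto simp: Int_stable_def sets.Int_stable)
  then have indC: "indep_set (sets (sigma (space M) {C})) (sets H)"
    using sets.sigma_sets_eq[of H] sH sets_measure_of[OF CS] by simp
  have "C \<in> sets (sigma (space M) {C})" using CS by simp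
  then have "(\<lambda>\<omega>. \<omega> \<in> C) \<in> measurable (sigma (space M) {C}) (count_space UNIV)"
    by measurable
  from measurable_sets[OF this] have sub:
    "{(\<lambda>\<omega>. \<omega> \<in> C) -` B \<inter> space M | B. B \<in> sets (count_space UNIV)} \<subseteq> sets (sigma (space M) {C})"
    using space_measure_of[OF CS] by auto
  show ?thesis
    unfolding indep_sets2_eq
  proof (intro conjI ballI)
    show "sets H \<subseteq> events" using indC by (simp add: indep_sets2_eq)
    show "{(\<lambda>\<omega>. \<omega> \<in> C) -` B \<inter> space M | B. B \<in> sets (count_space UNIV)} \<subseteq> events"
      using order_trans[OF sub] indC by (simp add: indep_sets2_eq)
    fix a b assume a: "a \<in> sets H" and "b \<in> {(\<lambda>\<omega>. \<omega> \<in> C) -` B \<inter> space M | B. B \<in> sets (count_space UNIV)}"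
    with sub have "b \<in> sets (sigma (space M) {C})" by blast
    with a indC have "prob (b \<inter> a) = prob b * prob a" by (simp add: indep_sets2_eq)
    then show "prob (a \<inter> b) = prob a * prob b" by (simp add: Int_commute mult.commute)
  qed
qed

lemma (in prob_space) nn_cond_exp_if_indep_event_self:
  assumes H: "subalgebra M H" and C: "C \<in> events" and ind: "indep_set {C} (sets H)" and pC: "prob C = p"
    and h1[measurable]: "h1 \<in> borel_measurable H" and h2[measurable]: "h2 \<in> borel_measurable H"
  shows "AE \<omega> in M. nn_cond_exp M H (\<lambda>\<omega>. if \<omega> \<in> C then h1 \<omega> else h2 \<omega>) \<omega>
     = ennreal p * h1 \<omega> + ennreal (1 - p) * h2 \<omega>"
proof -
  define Y where "Y = (\<lambda>\<omega>. \<omega> \<in> C)"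
  have Y: "Y \<in> measurable M (count_space UNIV)" unfolding Y_def using C by measurable
  have X: "(\<lambda>\<omega>. (h1 \<omega>, h2 \<omega>)) \<in> measurable H (borel \<Otimes>\<^sub>M borel)" by measurable
  define f where "f = (\<lambda>z::(ennreal \<times> ennreal) \<times> bool. if snd z then fst (fst z) else snd (fst z))"
  have f: "f \<in> borel_measurable ((borel \<Otimes>\<^sub>M borel) \<Otimes>\<^sub>M count_space UNIV)"
    unfolding f_def by measurable
  have pC': "emeasure M C = ennreal p" "emeasure M (space M - C) = ennreal (1 - p)"
    using pC prob_compl[OF C] by (auto simp: emeasure_eq_measure)
  have coin: "(\<integral>\<^sup>+y. f ((a, a'), y) \<partial>distr M (count_space UNIV) Y) = ennreal p * a + ennreal (1 - p) * a'"
    for a a'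
  proof -
    have "(\<integral>\<^sup>+y. f ((a, a'), y) \<partial>distr M (count_space UNIV) Y)
        = (\<integral>\<^sup>+\<omega>. a * indicator C \<omega> + a' * indicator (space M - C) \<omega> \<partial>M)"
      using Y by (subst nn_integral_distr) (auto simp: f_def Y_def indicator_def intro!: nn_integral_cong)
    also have "\<dots> = a * emeasure M C + a' * emeasure M (space M - C)"
      using C by (subst nn_integral_add) (auto simp: nn_integral_cmult_indicator)
    finally show ?thesis by (simp add: pC' mult.commute)
  qed
  have "(\<lambda>\<omega>. f ((h1 \<omega>, h2 \<omega>), Y \<omega>)) = (\<lambda>\<omega>. if \<omega> \<in> C then h1 \<omega> else h2 \<omega>)"
    by (auto simp: f_def Y_def)
  with nn_cond_exp_freeze[OF H X Y indep_set_indicator[OF H C ind, folded Y_def] f]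
  show ?thesis unfolding coin by simp
qed

lemma (in prob_space) nn_cond_exp_if_indep_event:
  assumes F: "subalgebra M F" and H: "subalgebra M H" and HF: "subalgebra H F"
    and C: "C \<in> events" and ind: "indep_set {C} (sets H)" and pC: "prob C = p"
    and h1[measurable]: "h1 \<in> borel_measurable H" and h2[measurable]: "h2 \<in> borel_measurable H"
  shows "AE \<omega> in M. nn_cond_exp M F (\<lambda>\<omega>. if \<omega> \<in> C then h1 \<omega> else h2 \<omega>) \<omega>
     = ennreal p * nn_cond_exp M F h1 \<omega> + ennreal (1 - p) * nn_cond_exp M F h2 \<omega>"
proof -
  interpret finite_measure_subalgebra M F by unfold_locales (fact F)
  have [measurable]: "C \<in> sets M" by fact
  have [measurable]: "h1 \<in> borel_measurable M" "h2 \<in> borel_measurable M"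
    using measurable_from_subalg[OF H h1] measurable_from_subalg[OF H h2] by auto
  have "AE \<omega> in M. nn_cond_exp M F (nn_cond_exp M H (\<lambda>\<omega>. if \<omega> \<in> C then h1 \<omega> else h2 \<omega>)) \<omega>
      = nn_cond_exp M F (\<lambda>\<omega>. ennreal p * h1 \<omega> + ennreal (1 - p) * h2 \<omega>) \<omega>"
    using nn_cond_exp_if_indep_event_self[OF H C ind pC h1 h2]
    by (rule nn_cond_exp_cong) (auto intro: borel_measurable_nn_cond_exp2)
  moreover have "AE \<omega> in M. nn_cond_exp M F (\<lambda>\<omega>. if \<omega> \<in> C then h1 \<omega> else h2 \<omega>) \<omega>
      = nn_cond_exp M F (nn_cond_exp M H (\<lambda>\<omega>. if \<omega> \<in> C then h1 \<omega> else h2 \<omega>)) \<omega>"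
    by (rule nn_cond_exp_nested_subalg[OF H HF]) measurable
  moreover have "AE \<omega> in M. nn_cond_exp M F (\<lambda>\<omega>. ennreal p * h1 \<omega>) \<omega> + nn_cond_exp M F (\<lambda>\<omega>. ennreal (1 - p) * h2 \<omega>) \<omega>
      = nn_cond_exp M F (\<lambda>\<omega>. ennreal p * h1 \<omega> + ennreal (1 - p) * h2 \<omega>) \<omega>"
    by (rule nn_cond_exp_sum) auto
  moreover have "AE \<omega> in M. ennreal p * nn_cond_exp M F h1 \<omega> = nn_cond_exp M F (\<lambda>\<omega>. ennreal p * h1 \<omega>) \<omega>"
    by (rule nn_cond_exp_prod) auto
  moreover have "AE \<omega> in M. ennreal (1 - p) * nn_cond_exp M F h2 \<omega> = nn_cond_exp M F (\<lambda>\<omega>. ennreal (1 - p) * h2 \<omega>) \<omega>"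
    by (rule nn_cond_exp_prod) auto
  ultimately show ?thesis by eventually_elim simp
qed

lemma (in prob_space) nn_cond_exp_if_indep_event_freeze:
  assumes F: "subalgebra M F" and H: "subalgebra M H" and HF: "subalgebra H F"
    and C: "C \<in> events" and indC: "indep_set {C} (sets H)" and pC: "prob C = p"
    and h: "h \<in> borel_measurable H" and Y[measurable]: "Y \<in> measurable H P"
    and indY: "indep_set (sets F) {Y -` B \<inter> space M | B. B \<in> sets P}"
    and f[measurable]: "f \<in> borel_measurable (F \<Otimes>\<^sub>M P)"
  shows "AE \<omega> in M. nn_cond_exp M F (\<lambda>\<omega>. if \<omega> \<in> C then h \<omega> else f (\<omega>, Y \<omega>)) \<omega>
     = ennreal p * nn_cond_exp M F h \<omega> + ennreal (1 - p) * (\<integral>\<^sup>+y. f (\<omega>, y) \<partial>distr M P Y)"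
proof -
  have YM: "Y \<in> measurable M P" by (rule measurable_from_subalg[OF H Y])
  have [measurable]: "(\<lambda>\<omega>. \<omega>) \<in> measurable H F" by (rule measurable_from_subalg[OF HF measurable_ident_sets]) simp
  have "(\<lambda>\<omega>. f (\<omega>, Y \<omega>)) \<in> borel_measurable H" by measurable
  from nn_cond_exp_if_indep_event[OF F H HF C indC pC h this]
    nn_cond_exp_freeze[OF F measurable_ident_sets[OF refl] YM indY f]
  show ?thesis by eventually_elim simp
qed

lemma (in sigma_finite_subalgebra) nn_cond_exp_finite:
  assumes "integrable M f"
  shows "AE \<omega> in M. nn_cond_exp M F (\<lambda>\<omega>. ennreal (f \<omega>)) \<omega> \<noteq> \<infinity>"
proof (rule nn_integral_PInf_AE)
  have "(\<integral>\<^sup>+\<omega>. nn_cond_exp M F (\<lambda>\<omega>. ennreal (f \<omega>)) \<omega> \<partial>M) = (\<integral>\<^sup>+\<omega>. ennreal (f \<omega>) \<partial>M)"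
    using nn_cond_exp_intg[of "\<lambda>_. 1" "\<lambda>\<omega>. ennreal (f \<omega>)"] assms by simp
  then show "(\<integral>\<^sup>+\<omega>. nn_cond_exp M F (\<lambda>\<omega>. ennreal (f \<omega>)) \<omega> \<partial>M) \<noteq> \<infinity>"
    using integrableD(2)[OF assms] by simp
qed simp

text \<open>Since \<open>real_cond_exp\<close> is defined through the conditional expectations of the positive
  and negative parts, a mixture identity for these two transfers to \<open>real_cond_exp\<close>.\<close>

lemma (in sigma_finite_subalgebra) real_cond_exp_mixture:
  fixes e d :: "'a \<Rightarrow> real" and g :: "'a \<Rightarrow> 'b \<Rightarrow> real"
  assumes p: "0 \<le> p" "p \<le> 1" and d: "integrable M d" and g: "\<And>\<omega>. integrable Q (g \<omega>)"
    and pos: "AE \<omega> in M. nn_cond_exp M F (\<lambda>\<omega>. ennreal (e \<omega>)) \<omega>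
      = ennreal p * nn_cond_exp M F (\<lambda>\<omega>. ennreal (d \<omega>)) \<omega> + ennreal (1 - p) * (\<integral>\<^sup>+y. ennreal (g \<omega> y) \<partial>Q)"
    and neg: "AE \<omega> in M. nn_cond_exp M F (\<lambda>\<omega>. ennreal (- e \<omega>)) \<omega>
      = ennreal p * nn_cond_exp M F (\<lambda>\<omega>. ennreal (- d \<omega>)) \<omega> + ennreal (1 - p) * (\<integral>\<^sup>+y. ennreal (- g \<omega> y) \<partial>Q)"
  shows "AE \<omega> in M. real_cond_exp M F e \<omega> = p * real_cond_exp M F d \<omega> + (1 - p) * (\<integral>y. g \<omega> y \<partial>Q)"
proof -
  have combo: "enn2real (ennreal p * A + ennreal (1 - p) * B) = p * enn2real A + (1 - p) * enn2real B"
    if "A \<noteq> \<infinity>" "B \<noteq> \<infinity>" for A B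
  proof -
    have "ennreal p * A < top" "ennreal (1 - p) * B < top"
      using that by (simp_all add: ennreal_mult_eq_top_iff less_top[symmetric])
    then show ?thesis using p by (simp add: enn2real_plus enn2real_mult)
  qed
  have "AE \<omega> in M. nn_cond_exp M F (\<lambda>\<omega>. ennreal (- d \<omega>)) \<omega> \<noteq> \<infinity>"
    using d by (intro nn_cond_exp_finite) simp
  with pos neg nn_cond_exp_finite[OF d] show ?thesis
  proof eventually_elim
    case (elim \<omega>)
    have "(\<integral>\<^sup>+y. ennreal (g \<omega> y) \<partial>Q) \<noteq> \<infinity>" "(\<integral>\<^sup>+y. ennreal (- g \<omega> y) \<partial>Q) \<noteq> \<infinity>"
      using integrableD(2,3)[OF g] by auto
    with elim show ?case
      by (simp add: real_cond_exp_def combo real_lebesgue_integral_def[OF g] algebra_simps)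
  qed
qed

section \<open>Second moments\<close>

lemma norm_diff_sq_le: "(norm (a - b))\<^sup>2 \<le> 2 * (norm a)\<^sup>2 + 2 * (norm (b :: 'a::real_normed_vector))\<^sup>2"
proof -
  have "(norm (a - b))\<^sup>2 \<le> (norm a + norm b)\<^sup>2"
    using norm_triangle_ineq4[of a b] by (simp add: power_mono)
  also have "\<dots> \<le> 2 * (norm a)\<^sup>2 + 2 * (norm b)\<^sup>2"
    using sum_squares_ge_zero[of "norm a - norm b" 0] by (simp add: power2_eq_square algebra_simps)
  finally show ?thesis .
qed

lemma integrable_norm_sq_if_finite:
  fixes f :: "'a \<Rightarrow> 'b::real_normed_vector"
  assumes "f \<in> borel_measurable M" and "(\<integral>\<^sup>+x. ennreal ((norm (f x))\<^sup>2) \<partial>M) \<noteq> \<infinity>"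
  shows "integrable M (\<lambda>x. (norm (f x))\<^sup>2)"
  using assms unfolding integrable_iff_bounded by (auto simp: less_top)

lemma (in finite_measure) integrable_if_norm_sq_finite:
  fixes f :: "'a \<Rightarrow> 'b::{banach, second_countable_topology}"
  assumes f[measurable]: "f \<in> borel_measurable M" and fin: "(\<integral>\<^sup>+x. ennreal ((norm (f x))\<^sup>2) \<partial>M) \<noteq> \<infinity>"
  shows "integrable M f"
proof -
  have "(\<lambda>x. norm (f x)) \<in> borel_measurable M" by measurable
  moreover have "integrable M (\<lambda>x. (norm (f x))\<^sup>2)" by (rule integrable_norm_sq_if_finite[OF f fin])
  ultimately have "integrable M (\<lambda>x. norm (f x))" by (rule square_integrable_imp_integrable)
  then show ?thesis using integrable_norm_iff[OF f] by blast
qed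

lemma (in prob_space) nn_integral_norm_sq_add_mean_zero:
  fixes W :: "'a \<Rightarrow> 'b::euclidean_space"
  assumes [measurable]: "W \<in> borel_measurable M" and W: "integrable M W" and W0: "expectation W = 0"
    and fin: "(\<integral>\<^sup>+y. ennreal ((norm (W y))\<^sup>2) \<partial>M) \<noteq> \<infinity>"
  shows "(\<integral>\<^sup>+y. ennreal ((norm (u + W y))\<^sup>2) \<partial>M) = ennreal ((norm u)\<^sup>2) + (\<integral>\<^sup>+y. ennreal ((norm (W y))\<^sup>2) \<partial>M)"
proof -
  have sq: "integrable M (\<lambda>y. (norm (W y))\<^sup>2)" by (rule integrable_norm_sq_if_finite[OF _ fin]) simp
  have expand: "(norm (u + W y))\<^sup>2 = (norm u)\<^sup>2 + 2 * (u \<bullet> W y) + (norm (W y))\<^sup>2" for y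
    by (simp add: power2_norm_eq_inner inner_add_left inner_add_right inner_commute)
  have cross: "integrable M (\<lambda>y. u \<bullet> W y)" using W by auto
  have "integrable M (\<lambda>y. (norm u)\<^sup>2 + 2 * (u \<bullet> W y) + (norm (W y))\<^sup>2)" using cross sq by auto
  then have "(\<integral>\<^sup>+y. ennreal ((norm (u + W y))\<^sup>2) \<partial>M) = ennreal (\<integral>y. (norm (u + W y))\<^sup>2 \<partial>M)"
    by (intro nn_integral_eq_integral) (simp_all only: expand[symmetric], simp)
  also have "(\<integral>y. (norm (u + W y))\<^sup>2 \<partial>M) = (norm u)\<^sup>2 + (\<integral>y. (norm (W y))\<^sup>2 \<partial>M)"
    using cross sq W W0 by (simp add: expand prob_space)
  also have "ennreal \<dots> = ennreal ((norm u)\<^sup>2) + ennreal (\<integral>y. (norm (W y))\<^sup>2 \<partial>M)"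
    by (rule ennreal_plus) auto
  also have "ennreal (\<integral>y. (norm (W y))\<^sup>2 \<partial>M) = (\<integral>\<^sup>+y. ennreal ((norm (W y))\<^sup>2) \<partial>M)"
    by (rule nn_integral_eq_integral[symmetric]) (use sq in auto)
  finally show ?thesis .
qed

lemma (in prob_space) nn_integral_norm_sq_decomp:
  fixes V :: "'a \<Rightarrow> 'b::euclidean_space"
  assumes [measurable]: "V \<in> borel_measurable M" and V: "integrable M V"
    and fin: "(\<integral>\<^sup>+y. ennreal ((norm (V y))\<^sup>2) \<partial>M) \<noteq> \<infinity>"
  shows "(\<integral>\<^sup>+y. ennreal ((norm (V y))\<^sup>2) \<partial>M)
    = ennreal ((norm (expectation V))\<^sup>2) + (\<integral>\<^sup>+y. ennreal ((norm (V y - expectation V))\<^sup>2) \<partial>M)"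
proof -
  let ?m = "expectation V"
  have "(\<integral>\<^sup>+y. ennreal ((norm (V y - ?m))\<^sup>2) \<partial>M)
      \<le> (\<integral>\<^sup>+y. ennreal (2 * (norm (V y))\<^sup>2) + ennreal (2 * (norm ?m)\<^sup>2) \<partial>M)"
    by (rule nn_integral_mono) (simp add: ennreal_plus[symmetric] norm_diff_sq_le del: ennreal_plus)
  also have "\<dots> = (\<integral>\<^sup>+y. ennreal 2 * ennreal ((norm (V y))\<^sup>2) \<partial>M) + ennreal (2 * (norm ?m)\<^sup>2)"
    by (subst nn_integral_add) (auto simp: emeasure_space_1 ennreal_mult)
  also have "\<dots> = ennreal 2 * (\<integral>\<^sup>+y. ennreal ((norm (V y))\<^sup>2) \<partial>M) + ennreal (2 * (norm ?m)\<^sup>2)"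
    by (subst nn_integral_cmult) auto
  also have "\<dots> < \<infinity>" using fin by (simp add: less_top ennreal_mult_less_top)
  finally have "(\<integral>\<^sup>+y. ennreal ((norm (V y - ?m))\<^sup>2) \<partial>M) \<noteq> \<infinity>" by simp
  then have "(\<integral>\<^sup>+y. ennreal ((norm (?m + (V y - ?m)))\<^sup>2) \<partial>M)
      = ennreal ((norm ?m)\<^sup>2) + (\<integral>\<^sup>+y. ennreal ((norm (V y - ?m))\<^sup>2) \<partial>M)"
    by (rule nn_integral_norm_sq_add_mean_zero[rotated 3]) (use V in \<open>auto simp: prob_space\<close>)
  then show ?thesis by simp
qed

lemma (in prob_space)
  fixes W :: "'a \<Rightarrow> 'b::euclidean_space"
  assumes Wm[measurable]: "W \<in> borel_measurable M" and W: "integrable M W"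
  shows integrable_iid_sum: "integrable (PiM {..<n} (\<lambda>_. M)) (\<lambda>y. \<Sum>j<n. W (y j))"
    and integral_iid_sum: "(\<integral>y. (\<Sum>j<n. W (y j)) \<partial>PiM {..<n} (\<lambda>_. M)) = real n *\<^sub>R expectation W"
proof -
  have comp: "(\<lambda>y. y j) \<in> measurable (PiM {..<n} (\<lambda>_. M)) M"
    and distr_comp: "distr (PiM {..<n} (\<lambda>_. M)) M (\<lambda>y. y j) = M" if "j < n" for j
    using that distr_PiM_component[of "{..<n}" "\<lambda>_. M" j] prob_space_axioms by auto
  have "integrable (PiM {..<n} (\<lambda>_. M)) (\<lambda>y. W (y j))"
    and "(\<integral>y. W (y j) \<partial>PiM {..<n} (\<lambda>_. M)) = expectation W" if "j < n" for j
    using integrable_distr_eq[OF comp[OF that] Wm] integral_distr[OF comp[OF that] Wm] distr_comp[OF that] W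
    by simp_all
  then show "integrable (PiM {..<n} (\<lambda>_. M)) (\<lambda>y. \<Sum>j<n. W (y j))"
    and "(\<integral>y. (\<Sum>j<n. W (y j)) \<partial>PiM {..<n} (\<lambda>_. M)) = real n *\<^sub>R expectation W"
    by (auto simp: sum_constant_scaleR)
qed

lemma (in prob_space) nn_integral_norm_sq_iid_sum:
  fixes W :: "'a \<Rightarrow> 'b::euclidean_space"
  assumes Wm[measurable]: "W \<in> borel_measurable M" and W: "integrable M W" and W0: "expectation W = 0"
    and fin: "(\<integral>\<^sup>+y. ennreal ((norm (W y))\<^sup>2) \<partial>M) \<noteq> \<infinity>"
  shows "(\<integral>\<^sup>+y. ennreal ((norm (c + (\<Sum>j<n. W (y j))))\<^sup>2) \<partial>PiM {..<n} (\<lambda>_. M))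
     = ennreal ((norm c)\<^sup>2) + of_nat n * (\<integral>\<^sup>+z. ennreal ((norm (W z))\<^sup>2) \<partial>M)"
proof (induction n)
  case 0
  show ?case using prob_space.emeasure_space_1[OF prob_space_PiM[OF prob_space_axioms, of "{}::nat set"]] by simp
next
  case (Suc n)
  interpret PP: product_prob_space "\<lambda>_::nat. M" by unfold_locales
  interpret Pn: prob_space "PiM {..<n} (\<lambda>_. M)" by (intro prob_space_PiM) unfold_locales
  let ?K = "\<integral>\<^sup>+z. ennreal ((norm (W z))\<^sup>2) \<partial>M"
  have "(\<integral>\<^sup>+y. ennreal ((norm (c + (\<Sum>j<Suc n. W (y j))))\<^sup>2) \<partial>PiM {..<Suc n} (\<lambda>_. M))
      = (\<integral>\<^sup>+y. (\<integral>\<^sup>+z. ennreal ((norm (c + (\<Sum>j<Suc n. W ((y(n := z)) j))))\<^sup>2) \<partial>M) \<partial>PiM {..<n} (\<lambda>_. M))"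
    unfolding lessThan_Suc by (rule PP.product_nn_integral_insert) auto
  also have "\<dots> = (\<integral>\<^sup>+y. ennreal ((norm (c + (\<Sum>j<n. W (y j))))\<^sup>2) + ?K \<partial>PiM {..<n} (\<lambda>_. M))"
  proof (rule nn_integral_cong)
    fix y :: "nat \<Rightarrow> 'a"
    have "(\<Sum>j<Suc n. W ((y(n := z)) j)) = (\<Sum>j<n. W (y j)) + W z" for z
      by simp
    then show "(\<integral>\<^sup>+z. ennreal ((norm (c + (\<Sum>j<Suc n. W ((y(n := z)) j))))\<^sup>2) \<partial>M)
        = ennreal ((norm (c + (\<Sum>j<n. W (y j))))\<^sup>2) + ?K"
      using nn_integral_norm_sq_add_mean_zero[OF Wm W W0 fin, of "c + (\<Sum>j<n. W (y j))"]
      by (simp add: add.assoc)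
  qed
  also have "\<dots> = (\<integral>\<^sup>+y. ennreal ((norm (c + (\<Sum>j<n. W (y j))))\<^sup>2) \<partial>PiM {..<n} (\<lambda>_. M)) + ?K"
    by (subst nn_integral_add) (auto simp: Pn.emeasure_space_1)
  finally show ?case by (simp add: Suc.IH distrib_right add.assoc)
qed

section \<open>Independent mini-batches\<close>

lemma measurable_sigma_if_vimage:
  assumes G: "G \<subseteq> Pow \<Omega>" and f: "f \<in> \<Omega> \<rightarrow> space N"
    and vimage: "\<And>A. A \<in> sets N \<Longrightarrow> f -` A \<inter> \<Omega> \<in> G"
  shows "f \<in> measurable (sigma \<Omega> G) N"
proof (rule measurableI)
  show "f x \<in> space N" if "x \<in> space (sigma \<Omega> G)" for x
    using that f space_measure_of[OF G] by auto
  show "f -` A \<inter> space (sigma \<Omega> G) \<in> sets (sigma \<Omega> G)" if "A \<in> sets N" for A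
    using vimage[OF that] space_measure_of[OF G] sets_measure_of[OF G] by auto
qed

lemma Int_stable_vimage: "Int_stable {f -` A \<inter> \<Omega> | A. A \<in> sets N}"
proof (rule Int_stableI, safe)
  fix A B assume "A \<in> sets N" "B \<in> sets N"
  then show "\<exists>D. f -` A \<inter> \<Omega> \<inter> (f -` B \<inter> \<Omega>) = f -` D \<inter> \<Omega> \<and> D \<in> sets N"
    by (intro exI[of _ "A \<inter> B"]) auto
qed

lemma (in prob_space) indep_sets_reindex:
  assumes ind: "indep_sets E (f ` I)" and inj: "inj_on f I"
  shows "indep_sets (\<lambda>j. E (f j)) I"
  unfolding indep_sets_def
proof (intro conjI ballI allI impI)
  show "E (f j) \<subseteq> events" if "j \<in> I" for j
    using ind that unfolding indep_sets_def by auto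
next
  fix J A assume J: "J \<subseteq> I" "J \<noteq> {}" "finite J" and A: "A \<in> Pi J (\<lambda>j. E (f j))"
  define A' where "A' = (\<lambda>u. A (the_inv_into I f u))"
  have inv: "the_inv_into I f (f j) = j" if "j \<in> J" for j
    using the_inv_into_f_f[OF inj] J that by auto
  have "A' \<in> Pi (f ` J) E" using A by (auto simp: A'_def inv Pi_iff)
  then have "prob (\<Inter>u\<in>f ` J. A' u) = (\<Prod>u\<in>f ` J. prob (A' u))"
    using ind J unfolding indep_sets_def by (meson finite_imageI image_is_empty image_mono)
  moreover have "(\<Inter>u\<in>f ` J. A' u) = (\<Inter>j\<in>J. A j)" by (auto simp: A'_def inv)
  moreover have "(\<Prod>u\<in>f ` J. prob (A' u)) = (\<Prod>j\<in>J. prob (A j))"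
    using inj J by (subst prod.reindex) (auto simp: A'_def inv intro: inj_on_subset)
  ultimately show "prob (\<Inter>j\<in>J. A j) = (\<Prod>j\<in>J. prob (A j))" by simp
qed

lemma (in prob_space) indep_set_sigma_batch:
  assumes F: "subalgebra M F"
    and ind: "indep_sets (\<lambda>i. case i of None \<Rightarrow> sets F | Some j \<Rightarrow> {\<zeta> j -` A \<inter> space M | A. A \<in> sets P})
      (insert None (Some ` {..<b}))"
  shows "indep_set (sets F) (sigma_sets (space M) (\<Union>j<b. {\<zeta> j -` A \<inter> space M | A. A \<in> sets P}))"
proof -
  define E where "E = (\<lambda>i. case i of None \<Rightarrow> sets F | Some j \<Rightarrow> {\<zeta> j -` A \<inter> space M | A. A \<in> sets P})"
  define I where "I = (\<lambda>t::bool. if t then {None} else Some ` {..<b})"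
  have collect: "indep_sets (\<lambda>t. sigma_sets (space M) (\<Union>i\<in>I t. E i)) UNIV"
  proof (rule indep_sets_collect_sigma)
    have "(\<Union>t. I t) = insert None (Some ` {..<b})" by (auto simp: I_def)
    then show "indep_sets E (\<Union>t\<in>UNIV. I t)" using ind unfolding E_def by simp
    show "Int_stable (E i)" for i
      by (simp add: E_def Int_stable_vimage sets.Int_stable split: option.split)
    show "disjoint_family_on I UNIV" by (auto simp: disjoint_family_on_def I_def)
  qed
  have "sigma_sets (space M) (\<Union>i\<in>I True. E i) = sets F"
    using sets.sigma_sets_eq[of F] F by (simp add: I_def E_def subalgebra_def)
  moreover have "(\<Union>i\<in>I False. E i) = (\<Union>j<b. {\<zeta> j -` A \<inter> space M | A. A \<in> sets P})"
    by (auto simp: I_def E_def)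
  ultimately have "(\<lambda>t. sigma_sets (space M) (\<Union>i\<in>I t. E i))
      = case_bool (sets F) (sigma_sets (space M) (\<Union>j<b. {\<zeta> j -` A \<inter> space M | A. A \<in> sets P}))"
    by (intro ext) (simp split: bool.split)
  with collect show ?thesis unfolding indep_set_def by simp
qed

lemma (in prob_space) indep_set_batch:
  assumes F: "subalgebra M F" and \<zeta>: "\<And>j. random_variable P (\<zeta> j)"
    and ind: "indep_sets (\<lambda>i. case i of None \<Rightarrow> sets F | Some j \<Rightarrow> {\<zeta> j -` A \<inter> space M | A. A \<in> sets P})
      (insert None (Some ` {..<b}))"
  shows "indep_set (sets F) {(\<lambda>\<omega>. \<lambda>j\<in>{..<b}. \<zeta> j \<omega>) -` B \<inter> space M | B. B \<in> sets (PiM {..<b} (\<lambda>_. P))}"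
proof -
  define Gz where "Gz = (\<Union>j<b. {\<zeta> j -` A \<inter> space M | A. A \<in> sets P})"
  have Gz: "Gz \<subseteq> Pow (space M)" by (auto simp: Gz_def)
  have "\<zeta> j \<in> measurable (sigma (space M) Gz) P" if "j < b" for j
    using that measurable_space[OF \<zeta>] by (intro measurable_sigma_if_vimage[OF Gz]) (auto simp: Gz_def)
  then have "(\<lambda>\<omega>. \<lambda>j\<in>{..<b}. \<zeta> j \<omega>) \<in> measurable (sigma (space M) Gz) (PiM {..<b} (\<lambda>_. P))"
    by (intro measurable_restrict) auto
  from measurable_sets[OF this] have sub:
    "{(\<lambda>\<omega>. \<lambda>j\<in>{..<b}. \<zeta> j \<omega>) -` B \<inter> space M | B. B \<in> sets (PiM {..<b} (\<lambda>_. P))} \<subseteq> sigma_sets (space M) Gz"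
    using space_measure_of[OF Gz] sets_measure_of[OF Gz] by auto
  from indep_set_sigma_batch[OF F ind, folded Gz_def] show ?thesis
    unfolding indep_set_def by (rule indep_sets_mono_sets) (auto split: bool.split intro!: sub[THEN subsetD])
qed

lemma (in prob_space) distr_batch_eq_PiM:
  assumes b: "0 < b" and \<zeta>: "\<And>j. random_variable P (\<zeta> j)" and \<zeta>_distr: "\<And>j. distr M P (\<zeta> j) = P"
    and ind: "indep_sets (\<lambda>i. case i of None \<Rightarrow> sets F | Some j \<Rightarrow> {\<zeta> j -` A \<inter> space M | A. A \<in> sets P})
      (insert None (Some ` {..<b}))"
  shows "distr M (PiM {..<b} (\<lambda>_. P)) (\<lambda>\<omega>. \<lambda>j\<in>{..<b}. \<zeta> j \<omega>) = PiM {..<b} (\<lambda>_. P)"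
proof -
  have "indep_sets (\<lambda>i. case i of None \<Rightarrow> sets F | Some j \<Rightarrow> {\<zeta> j -` A \<inter> space M | A. A \<in> sets P}) (Some ` {..<b})"
    by (rule indep_sets_mono_index[OF _ ind]) auto
  from indep_sets_reindex[OF this] have "indep_vars (\<lambda>_. P) \<zeta> {..<b}"
    unfolding indep_vars_def2 using \<zeta> by simp
  moreover have "{..<b} \<noteq> {}" using b by auto
  ultimately show ?thesis
    using indep_vars_iff_distr_eq_PiM[where M'="\<lambda>_. P" and X=\<zeta>] \<zeta> by (simp add: \<zeta>_distr)
qed

section \<open>The stochastic oracle\<close>

locale stochastic_oracle = Pz: prob_space Pz
  for Pz :: "'z measure" +
  fixes Gb :: "'e::euclidean_space \<Rightarrow> 'z \<Rightarrow> 'e" and G :: "'e \<Rightarrow> 'e" and L :: real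
  assumes Gb_measurable: "(\<lambda>(y, z). Gb y z) \<in> borel_measurable (borel \<Otimes>\<^sub>M Pz)"
    and Gb_integrable: "\<And>y. integrable Pz (Gb y)"
    and G_eq_expectation: "\<And>y. G y = (\<integral>z. Gb y z \<partial>Pz)"
    and mean_square_lipschitz:
      "\<And>y y'. (\<integral>\<^sup>+z. ennreal ((norm (Gb y z - Gb y' z))\<^sup>2) \<partial>Pz) \<le> ennreal (L\<^sup>2 * (norm (y - y'))\<^sup>2)"
begin

lemma measurable_Gb_comp[measurable (raw)]:
  assumes "f \<in> borel_measurable N" and "g \<in> measurable N Pz"
  shows "(\<lambda>\<omega>. Gb (f \<omega>) (g \<omega>)) \<in> borel_measurable N"
  using measurable_compose[OF measurable_Pair[OF assms] Gb_measurable] by simp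

lemma G_measurable[measurable]: "G \<in> borel_measurable borel"
proof -
  have "(\<lambda>y. \<integral>z. Gb y z \<partial>Pz) \<in> borel_measurable borel"
    using Gb_measurable by (intro Pz.borel_measurable_lebesgue_integral) (simp add: case_prod_beta')
  then show ?thesis by (simp add: G_eq_expectation[abs_def])
qed

lemma G_lipschitz: "norm (G a - G a') \<le> \<bar>L\<bar> * norm (a - a')"
proof -
  have fin: "(\<integral>\<^sup>+z. ennreal ((norm (Gb a z - Gb a' z))\<^sup>2) \<partial>Pz) \<noteq> \<infinity>"
    using mean_square_lipschitz[of a a'] by (auto simp: top_unique)
  have "ennreal ((norm (G a - G a'))\<^sup>2) \<le> (\<integral>\<^sup>+z. ennreal ((norm (Gb a z - Gb a' z))\<^sup>2) \<partial>Pz)"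
    using Pz.nn_integral_norm_sq_decomp[OF _ _ fin] Gb_integrable by (simp add: G_eq_expectation)
  also have "\<dots> \<le> ennreal (L\<^sup>2 * (norm (a - a'))\<^sup>2)" by (rule mean_square_lipschitz)
  finally have "(norm (G a - G a'))\<^sup>2 \<le> (\<bar>L\<bar> * norm (a - a'))\<^sup>2"
    by (simp add: power_mult_distrib)
  then show ?thesis by (rule power2_le_imp_le) simp
qed

end

text \<open>Off the refresh event, the estimator error moves by the batch average of this centred
  sample, because S^k - S^(k-1) = 2 G x^k - 3 G x^(k-1) + G x^(k-2).\<close>

definition centered_increment :: "('e \<Rightarrow> 'z \<Rightarrow> 'e::real_vector) \<Rightarrow> ('e \<Rightarrow> 'e) \<Rightarrow> 'e \<Rightarrow> 'e \<Rightarrow> 'e \<Rightarrow> 'z \<Rightarrow> 'e"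
  where "centered_increment Gb G a a' a'' z =
    2 *\<^sub>R (Gb a z - G a) - 3 *\<^sub>R (Gb a' z - G a') + (Gb a'' z - G a'')"

context stochastic_oracle
begin

lemma centered_increment_measurable[measurable]:
  "centered_increment Gb G a a' a'' \<in> borel_measurable Pz"
  unfolding centered_increment_def[abs_def] by measurable

lemma centered_increment_integrable: "integrable Pz (centered_increment Gb G a a' a'')"
  unfolding centered_increment_def[abs_def] using Gb_integrable by auto

lemma centered_increment_mean_zero: "(\<integral>z. centered_increment Gb G a a' a'' z \<partial>Pz) = 0"
  unfolding centered_increment_def[abs_def] using Gb_integrable by (simp add: G_eq_expectation Pz.prob_space)

lemma nn_integral_centered_increment_le:
  "(\<integral>\<^sup>+z. ennreal ((norm (centered_increment Gb G a a' a'' z))\<^sup>2) \<partial>Pz)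
     \<le> ennreal (8 * L\<^sup>2 * (norm (a - a'))\<^sup>2 + 2 * L\<^sup>2 * (norm (a' - a''))\<^sup>2)"
proof -
  define D where "D = (\<lambda>y y' z. Gb y z - Gb y' z)"
  define V where "V = (\<lambda>z. 2 *\<^sub>R D a a' z - D a' a'' z)"
  have [measurable]: "V \<in> borel_measurable Pz" unfolding V_def D_def by measurable
  have V: "integrable Pz V" unfolding V_def D_def using Gb_integrable by auto
  have centered: "centered_increment Gb G a a' a'' z = V z - (\<integral>z. V z \<partial>Pz)" for z
  proof -
    have "(3::real) *\<^sub>R v = 2 *\<^sub>R v + v" for v :: 'e using scaleR_add_left[of 2 1 v] by simp
    then show ?thesis using Gb_integrable
      by (simp add: centered_increment_def V_def D_def G_eq_expectation algebra_simps)
  qed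
  have "(\<integral>\<^sup>+z. ennreal ((norm (V z))\<^sup>2) \<partial>Pz)
      \<le> (\<integral>\<^sup>+z. 8 * ennreal ((norm (D a a' z))\<^sup>2) + 2 * ennreal ((norm (D a' a'' z))\<^sup>2) \<partial>Pz)"
  proof (rule nn_integral_mono)
    fix z
    have "(norm (V z))\<^sup>2 \<le> 8 * (norm (D a a' z))\<^sup>2 + 2 * (norm (D a' a'' z))\<^sup>2"
      using norm_diff_sq_le[of "2 *\<^sub>R D a a' z" "D a' a'' z"] by (simp add: V_def power_mult_distrib)
    then have "ennreal ((norm (V z))\<^sup>2) \<le> ennreal (8 * (norm (D a a' z))\<^sup>2 + 2 * (norm (D a' a'' z))\<^sup>2)"
      by (rule ennreal_leI)
    then show "ennreal ((norm (V z))\<^sup>2) \<le> 8 * ennreal ((norm (D a a' z))\<^sup>2) + 2 * ennreal ((norm (D a' a'' z))\<^sup>2)"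
      by (simp add: ennreal_mult)
  qed
  also have "\<dots> = 8 * (\<integral>\<^sup>+z. ennreal ((norm (D a a' z))\<^sup>2) \<partial>Pz) + 2 * (\<integral>\<^sup>+z. ennreal ((norm (D a' a'' z))\<^sup>2) \<partial>Pz)"
    unfolding D_def by (simp add: nn_integral_add nn_integral_cmult)
  also have "\<dots> \<le> 8 * ennreal (L\<^sup>2 * (norm (a - a'))\<^sup>2) + 2 * ennreal (L\<^sup>2 * (norm (a' - a''))\<^sup>2)"
    unfolding D_def by (intro add_mono mult_left_mono mean_square_lipschitz) auto
  also have "\<dots> = ennreal (8 * L\<^sup>2 * (norm (a - a'))\<^sup>2 + 2 * L\<^sup>2 * (norm (a' - a''))\<^sup>2)"
    by (simp add: ennreal_mult ennreal_plus mult.assoc)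
  finally have bound: "(\<integral>\<^sup>+z. ennreal ((norm (V z))\<^sup>2) \<partial>Pz) \<le> \<dots>" .
  then have "(\<integral>\<^sup>+z. ennreal ((norm (V z))\<^sup>2) \<partial>Pz) \<noteq> \<infinity>" by (auto simp: top_unique)
  from Pz.nn_integral_norm_sq_decomp[OF _ V this]
  have "(\<integral>\<^sup>+z. ennreal ((norm (V z - (\<integral>z. V z \<partial>Pz)))\<^sup>2) \<partial>Pz) \<le> (\<integral>\<^sup>+z. ennreal ((norm (V z))\<^sup>2) \<partial>Pz)"
    by simp
  then show ?thesis unfolding centered using bound by (rule order_trans)
qed

end

lemma batch_average_centered_increment:
  fixes Gb :: "'e::real_vector \<Rightarrow> 'z \<Rightarrow> 'e"
  assumes "b \<noteq> 0"
  shows "(\<Sum>j<b. (1 / real b) *\<^sub>R centered_increment Gb G a a' a'' (zk j \<omega>))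
    = 2 *\<^sub>R batch_op Gb b zk a \<omega> - 3 *\<^sub>R batch_op Gb b zk a' \<omega> + batch_op Gb b zk a'' \<omega>
      - (2 *\<^sub>R G a - 3 *\<^sub>R G a' + G a'')"
  using assms
  by (simp add: batch_op_def centered_increment_def sum.distrib sum_subtractf scaleR_sum_right
      scaleR_diff_right scaleR_add_right sum_constant_scaleR)

lemma vr_est_error_recursion:
  fixes Gb :: "'e::real_vector \<Rightarrow> 'z \<Rightarrow> 'e"
  assumes "b \<noteq> 0"
  shows "vr_est Gb G b x C \<zeta> Sbar k \<omega> - frb_S G x k \<omega> =
    (if \<omega> \<in> C k then Sbar k \<omega> - frb_S G x k \<omega>
     else (if k = 0 then 0 else vr_est Gb G b x C \<zeta> Sbar (k - 1) \<omega> - frb_S G x (k - 1) \<omega>)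
       + (\<Sum>j<b. (1 / real b) *\<^sub>R centered_increment Gb G (x k \<omega>) (x (k - 1) \<omega>) (x (k - 2) \<omega>) (\<zeta> k j \<omega>)))"
proof -
  have three: "(3::real) *\<^sub>R v = v + (v + v)" for v :: 'e
    using scaleR_add_left[of 1 2 v] by (simp add: scaleR_2)
  show ?thesis
  proof (cases k)
    case 0
    then show ?thesis unfolding batch_average_centered_increment[OF assms]
      by (simp add: vr_step_def frb_S_def algebra_simps three scaleR_2)
  next
    case (Suc m)
    then have "Suc m - 2 = m - 1" by simp
    with Suc show ?thesis unfolding batch_average_centered_increment[OF assms]
      by (simp add: vr_step_def frb_S_def algebra_simps three scaleR_2)
  qed
qed

section \<open>The loopless estimator\<close>

locale loopless_estimator = stochastic_oracle Pz Gb G L + prob_space M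
  for Pz :: "'z measure" and Gb :: "'e::euclidean_space \<Rightarrow> 'z \<Rightarrow> 'e" and G L and M :: "'w measure" +
  fixes F :: "nat \<Rightarrow> 'w measure" and x :: "nat \<Rightarrow> 'w \<Rightarrow> 'e" and p :: real and b :: nat
    and C :: "nat \<Rightarrow> 'w set" and \<zeta> :: "nat \<Rightarrow> nat \<Rightarrow> 'w \<Rightarrow> 'z"
    and Sbar :: "nat \<Rightarrow> 'w \<Rightarrow> 'e" and \<sigma>k :: "nat \<Rightarrow> real"
  assumes F_subalgebra: "\<And>k. subalgebra M (F k)"
    and F_mono: "\<And>k. sets (F k) \<subseteq> sets (F (Suc k))"
    and x_measurable: "\<And>k. x k \<in> borel_measurable (F k)"
    and x_integrable: "\<And>k. integrable M (x k)"
    and C_measurable: "\<And>k. C k \<in> sets (F (Suc k))"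
    and \<zeta>_measurable: "\<And>k j. \<zeta> k j \<in> measurable (F (Suc k)) Pz"
    and Sbar_measurable: "\<And>k. Sbar k \<in> borel_measurable (F (Suc k))"
    and p: "p \<in> {0<..1}" and b: "b \<ge> 1"
    and \<zeta>_distr: "\<And>k j. distr M Pz (\<zeta> k j) = Pz"
    and \<zeta>_indep: "\<And>k. indep_sets
        (\<lambda>i. case i of None \<Rightarrow> sets (F k) | Some j \<Rightarrow> {\<zeta> k j -` A \<inter> space M | A. A \<in> sets Pz})
        (insert None (Some ` {..<b}))"
    and C_prob: "\<And>k. prob (C k) = p"
    and C_indep: "\<And>k. indep_set {C k}
        (sigma_sets (space M)
          (sets (F k) \<union> (\<Union>j<b. {\<zeta> k j -` A \<inter> space M | A. A \<in> sets Pz})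
             \<union> {Sbar k -` A \<inter> space M | A. A \<in> sets borel}))"
    and Sbar_mean: "\<And>k i. i \<in> Basis \<Longrightarrow> AE \<omega> in M.
        real_cond_exp M (F k) (\<lambda>\<omega>. Sbar k \<omega> \<bullet> i) \<omega> = frb_S G x k \<omega> \<bullet> i"
    and Sbar_var: "\<And>k. AE \<omega> in M.
        nn_cond_exp M (F k) (\<lambda>\<omega>. ennreal ((norm (Sbar k \<omega> - frb_S G x k \<omega>))\<^sup>2)) \<omega> \<le> ennreal ((\<sigma>k k)\<^sup>2)"
begin

abbreviation "est \<equiv> vr_est Gb G b x C \<zeta> Sbar"
abbreviation "S \<equiv> frb_S G x"
abbreviation "batch_space \<equiv> PiM {..<b} (\<lambda>_. Pz)"

definition err :: "nat \<Rightarrow> 'w \<Rightarrow> 'e" where "err k \<omega> = est k \<omega> - S k \<omega>"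

definition prev_err :: "nat \<Rightarrow> 'w \<Rightarrow> 'e" where "prev_err k \<omega> = (if k = 0 then 0 else err (k - 1) \<omega>)"

definition batch :: "nat \<Rightarrow> 'w \<Rightarrow> nat \<Rightarrow> 'z" where "batch k \<omega> = (\<lambda>j\<in>{..<b}. \<zeta> k j \<omega>)"

definition batch_err :: "nat \<Rightarrow> 'w \<Rightarrow> (nat \<Rightarrow> 'z) \<Rightarrow> 'e" where
  "batch_err k \<omega> y = prev_err k \<omega>
     + (\<Sum>j<b. (1 / real b) *\<^sub>R centered_increment Gb G (x k \<omega>) (x (k - 1) \<omega>) (x (k - 2) \<omega>) (y j))"

definition history :: "nat \<Rightarrow> 'w measure" where
  "history k = sigma (space M)
     (sets (F k) \<union> (\<Union>j<b. {\<zeta> k j -` A \<inter> space M | A. A \<in> sets Pz}) \<union> {Sbar k -` A \<inter> space M | A. A \<in> sets borel})"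

lemma err_eq: "err k \<omega> = (if \<omega> \<in> C k then Sbar k \<omega> - S k \<omega> else batch_err k \<omega> (batch k \<omega>))"
  using vr_est_error_recursion[of b Gb G x C \<zeta> Sbar k \<omega>] b
  by (simp add: err_def prev_err_def batch_err_def batch_def)

lemma space_F[simp]: "space (F k) = space M"
  using F_subalgebra by (simp add: subalgebra_def)

lemma F_subalgebra_le: "j \<le> k \<Longrightarrow> subalgebra (F k) (F j)"
  using lift_Suc_mono_le[of "\<lambda>k. sets (F k)", OF F_mono] by (simp add: subalgebra_def)

lemma measurable_F_le: "f \<in> measurable (F j) N \<Longrightarrow> j \<le> k \<Longrightarrow> f \<in> measurable (F k) N"
  using measurable_from_subalg[OF F_subalgebra_le] by blast

lemma measurable_F_M: "f \<in> measurable (F k) N \<Longrightarrow> f \<in> measurable M N"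
  using measurable_from_subalg[OF F_subalgebra] by blast

lemma x_measurable_le: "j \<le> k \<Longrightarrow> x j \<in> borel_measurable (F k)"
  using measurable_F_le[OF x_measurable] by blast

lemma S_measurable: "S k \<in> borel_measurable (F k)"
proof -
  have [measurable]: "x k \<in> borel_measurable (F k)" "x (k - 1) \<in> borel_measurable (F k)"
    using x_measurable_le by auto
  show ?thesis unfolding frb_S_def[abs_def] by measurable
qed

lemma vr_step_measurable:
  assumes [measurable]: "P \<in> borel_measurable (F (Suc k))"
  shows "(\<lambda>\<omega>. vr_step Gb b x C \<zeta> Sbar k (P \<omega>) \<omega>) \<in> borel_measurable (F (Suc k))"
proof -
  have [measurable]: "x k \<in> borel_measurable (F (Suc k))" "x (k - 1) \<in> borel_measurable (F (Suc k))"
    "x (k - 2) \<in> borel_measurable (F (Suc k))" "C k \<in> sets (F (Suc k))"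
    "Sbar k \<in> borel_measurable (F (Suc k))" "\<And>j. \<zeta> k j \<in> measurable (F (Suc k)) Pz"
    using x_measurable_le C_measurable Sbar_measurable \<zeta>_measurable by auto
  show ?thesis unfolding vr_step_def batch_op_def by measurable
qed

lemma est_measurable: "est k \<in> borel_measurable (F (Suc k))"
proof (induction k)
  case 0
  have [measurable]: "x 0 \<in> borel_measurable (F (Suc 0))" using x_measurable_le by auto
  show ?case by (simp add: vr_step_measurable)
next
  case (Suc k)
  then have "est k \<in> borel_measurable (F (Suc (Suc k)))" by (rule measurable_F_le) simp
  then show ?case by (simp add: vr_step_measurable)
qed

lemma err_measurable: "err k \<in> borel_measurable (F (Suc k))"
proof -
  have [measurable]: "est k \<in> borel_measurable (F (Suc k))" "S k \<in> borel_measurable (F (Suc k))"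
    using est_measurable measurable_F_le[OF S_measurable] by auto
  show ?thesis unfolding err_def[abs_def] by measurable
qed

lemma prev_err_measurable: "prev_err k \<in> borel_measurable (F k)"
  using err_measurable[of "k - 1"] by (cases k) (simp_all add: prev_err_def[abs_def])

lemma integrable_S: "integrable M (S k)"
proof -
  have G_integrable: "integrable M (\<lambda>\<omega>. G (x j \<omega>))" for j
  proof (rule Bochner_Integration.integrable_bound)
    show "integrable M (\<lambda>\<omega>. norm (G 0) + \<bar>L\<bar> * norm (x j \<omega>))" using x_integrable[of j] by auto
    show "(\<lambda>\<omega>. G (x j \<omega>)) \<in> borel_measurable M" using measurable_F_M[OF x_measurable[of j]] by measurable
    show "AE \<omega> in M. norm (G (x j \<omega>)) \<le> norm (norm (G 0) + \<bar>L\<bar> * norm (x j \<omega>))"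
    proof (rule AE_I2)
      fix \<omega>
      have "norm (G (x j \<omega>)) \<le> norm (G 0) + norm (G (x j \<omega>) - G 0)" by (rule norm_triangle_sub)
      also have "\<dots> \<le> norm (G 0) + \<bar>L\<bar> * norm (x j \<omega>)" using G_lipschitz[of "x j \<omega>" 0] by simp
      finally show "norm (G (x j \<omega>)) \<le> norm (norm (G 0) + \<bar>L\<bar> * norm (x j \<omega>))" by simp
    qed
  qed
  then show ?thesis unfolding frb_S_def[abs_def] by auto
qed

lemma history_generators:
  "sets (F k) \<union> (\<Union>j<b. {\<zeta> k j -` A \<inter> space M | A. A \<in> sets Pz}) \<union> {Sbar k -` A \<inter> space M | A. A \<in> sets borel}
     \<subseteq> Pow (space M)"
  using sets.sets_into_space[of _ "F k"] by auto

lemma space_history[simp]: "space (history k) = space M"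
  unfolding history_def using history_generators by (rule space_measure_of)

lemma sets_history: "sets (history k) = sigma_sets (space M)
     (sets (F k) \<union> (\<Union>j<b. {\<zeta> k j -` A \<inter> space M | A. A \<in> sets Pz}) \<union> {Sbar k -` A \<inter> space M | A. A \<in> sets borel})"
  unfolding history_def using history_generators by (rule sets_measure_of)

lemma subalgebra_history: "subalgebra M (history k)"
proof -
  have "sets (F k) \<subseteq> events" using F_subalgebra by (simp add: subalgebra_def)
  moreover have "\<zeta> k j -` A \<inter> space M \<in> events" if "A \<in> sets Pz" for j A
    using measurable_sets[OF measurable_F_M[OF \<zeta>_measurable] that] .
  moreover have "Sbar k -` A \<inter> space M \<in> events" if "A \<in> sets borel" for A
    using measurable_sets[OF measurable_F_M[OF Sbar_measurable] that] .
  ultimately show ?thesis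
    unfolding subalgebra_def sets_history by (auto intro!: sets.sigma_sets_subset)
qed

lemma subalgebra_history_F: "subalgebra (history k) (F k)"
  unfolding subalgebra_def sets_history by auto

lemma C_events: "C k \<in> events"
  using C_measurable F_subalgebra by (auto simp: subalgebra_def)

lemma C_indep_history: "indep_set {C k} (sets (history k))"
  unfolding sets_history by (rule C_indep)

lemma Sbar_measurable_history: "Sbar k \<in> borel_measurable (history k)"
  unfolding history_def using measurable_space[OF measurable_F_M[OF Sbar_measurable]]
  by (intro measurable_sigma_if_vimage[OF history_generators]) auto

lemma batch_measurable_history: "batch k \<in> measurable (history k) batch_space"
proof -
  have "\<zeta> k j \<in> measurable (history k) Pz" if "j < b" for j
    unfolding history_def using that measurable_space[OF measurable_F_M[OF \<zeta>_measurable]]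
    by (intro measurable_sigma_if_vimage[OF history_generators]) auto
  then show ?thesis unfolding batch_def[abs_def] by (intro measurable_restrict) auto
qed

lemma indep_batch: "indep_set (sets (F k)) {batch k -` B \<inter> space M | B. B \<in> sets batch_space}"
  unfolding batch_def[abs_def]
  by (rule indep_set_batch[OF F_subalgebra measurable_F_M[OF \<zeta>_measurable] \<zeta>_indep])

lemma distr_batch: "distr M batch_space (batch k) = batch_space"
  unfolding batch_def[abs_def] using b
  by (intro distr_batch_eq_PiM[OF _ measurable_F_M[OF \<zeta>_measurable] \<zeta>_distr \<zeta>_indep]) simp

lemma batch_err_measurable: "(\<lambda>(\<omega>, y). batch_err k \<omega> y) \<in> borel_measurable (F k \<Otimes>\<^sub>M batch_space)"
proof -
  have [measurable]: "x k \<in> borel_measurable (F k)" "x (k - 1) \<in> borel_measurable (F k)"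
    "x (k - 2) \<in> borel_measurable (F k)" "prev_err k \<in> borel_measurable (F k)"
    using x_measurable_le prev_err_measurable by auto
  have "(\<lambda>z. \<Sum>j<b. (1 / real b) *\<^sub>R centered_increment Gb G (x k (fst z)) (x (k - 1) (fst z)) (x (k - 2) (fst z)) (snd z j))
      \<in> borel_measurable (F k \<Otimes>\<^sub>M batch_space)"
  proof (rule borel_measurable_sum)
    fix j assume "j \<in> {..<b}"
    then have [measurable]: "(\<lambda>z. snd z j) \<in> measurable (F k \<Otimes>\<^sub>M batch_space) Pz"
      using measurable_compose[OF measurable_snd measurable_component_singleton[of j "{..<b}" "\<lambda>_. Pz"]] by simp
    show "(\<lambda>z. (1 / real b) *\<^sub>R centered_increment Gb G (x k (fst z)) (x (k - 1) (fst z)) (x (k - 2) (fst z)) (snd z j))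
        \<in> borel_measurable (F k \<Otimes>\<^sub>M batch_space)"
      unfolding centered_increment_def by measurable
  qed
  then show ?thesis unfolding batch_err_def case_prod_beta' by measurable
qed

lemma nn_cond_exp_err_mixture:
  fixes g :: "'e \<Rightarrow> ennreal"
  assumes g[measurable]: "g \<in> borel_measurable borel"
  shows "AE \<omega> in M. nn_cond_exp M (F k) (\<lambda>\<omega>. g (err k \<omega>)) \<omega>
     = ennreal p * nn_cond_exp M (F k) (\<lambda>\<omega>. g (Sbar k \<omega> - S k \<omega>)) \<omega>
       + ennreal (1 - p) * (\<integral>\<^sup>+y. g (batch_err k \<omega> y) \<partial>batch_space)"
proof -
  have [measurable]: "Sbar k \<in> borel_measurable (history k)" "S k \<in> borel_measurable (history k)"
    using Sbar_measurable_history measurable_from_subalg[OF subalgebra_history_F S_measurable] by auto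
  have refresh: "(\<lambda>\<omega>. g (Sbar k \<omega> - S k \<omega>)) \<in> borel_measurable (history k)" by measurable
  have fresh: "(\<lambda>z. g (batch_err k (fst z) (snd z))) \<in> borel_measurable (F k \<Otimes>\<^sub>M batch_space)"
    using measurable_compose[OF batch_err_measurable g] by (simp add: case_prod_beta')
  have "(\<lambda>\<omega>. g (err k \<omega>))
      = (\<lambda>\<omega>. if \<omega> \<in> C k then g (Sbar k \<omega> - S k \<omega>) else g (batch_err k (fst (\<omega>, batch k \<omega>)) (snd (\<omega>, batch k \<omega>))))"
    by (auto simp: err_eq)
  with nn_cond_exp_if_indep_event_freeze[OF F_subalgebra subalgebra_history subalgebra_history_F
      C_events C_indep_history C_prob refresh batch_measurable_history indep_batch fresh]
  show ?thesis by (simp add: distr_batch)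
qed

lemma nn_integral_batch_err_le:
  "(\<integral>\<^sup>+y. ennreal ((norm (batch_err k \<omega> y))\<^sup>2) \<partial>batch_space)
     \<le> ennreal ((norm (prev_err k \<omega>))\<^sup>2
         + (8 * L\<^sup>2 * (norm (x k \<omega> - x (k - 1) \<omega>))\<^sup>2 + 2 * L\<^sup>2 * (norm (x (k - 1) \<omega> - x (k - 2) \<omega>))\<^sup>2) / real b)"
proof -
  define V where "V = centered_increment Gb G (x k \<omega>) (x (k - 1) \<omega>) (x (k - 2) \<omega>)"
  define B where "B = 8 * L\<^sup>2 * (norm (x k \<omega> - x (k - 1) \<omega>))\<^sup>2 + 2 * L\<^sup>2 * (norm (x (k - 1) \<omega> - x (k - 2) \<omega>))\<^sup>2"
  have bpos: "real b > 0" using b by simp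
  have B0: "0 \<le> B" by (simp add: B_def)
  have [measurable]: "V \<in> borel_measurable Pz" unfolding V_def by measurable
  have "(\<integral>\<^sup>+z. ennreal ((norm ((1 / real b) *\<^sub>R V z))\<^sup>2) \<partial>Pz)
      = ennreal ((1 / real b)\<^sup>2) * (\<integral>\<^sup>+z. ennreal ((norm (V z))\<^sup>2) \<partial>Pz)"
    using bpos by (subst nn_integral_cmult[symmetric]) (auto simp: ennreal_mult[symmetric] power_divide)
  also have "\<dots> \<le> ennreal ((1 / real b)\<^sup>2) * ennreal B"
    unfolding V_def B_def by (intro mult_left_mono nn_integral_centered_increment_le) auto
  finally have scaled: "(\<integral>\<^sup>+z. ennreal ((norm ((1 / real b) *\<^sub>R V z))\<^sup>2) \<partial>Pz) \<le> ennreal ((1 / real b)\<^sup>2 * B)"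
    using B0 by (simp add: ennreal_mult)
  then have "(\<integral>\<^sup>+z. ennreal ((norm ((1 / real b) *\<^sub>R V z))\<^sup>2) \<partial>Pz) \<noteq> \<infinity>" by (auto simp: top_unique)
  then have "(\<integral>\<^sup>+y. ennreal ((norm (batch_err k \<omega> y))\<^sup>2) \<partial>batch_space)
      = ennreal ((norm (prev_err k \<omega>))\<^sup>2) + of_nat b * (\<integral>\<^sup>+z. ennreal ((norm ((1 / real b) *\<^sub>R V z))\<^sup>2) \<partial>Pz)"
    unfolding batch_err_def V_def
    using centered_increment_integrable centered_increment_mean_zero
    by (intro Pz.nn_integral_norm_sq_iid_sum) auto
  also have "\<dots> \<le> ennreal ((norm (prev_err k \<omega>))\<^sup>2) + of_nat b * ennreal ((1 / real b)\<^sup>2 * B)"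
    using scaled by (intro add_left_mono mult_left_mono) auto
  also have "of_nat b * ennreal ((1 / real b)\<^sup>2 * B) = ennreal (B / real b)"
    using bpos B0 by (simp add: ennreal_of_nat_eq_real_of_nat ennreal_mult[symmetric] power2_eq_square)
  also have "ennreal ((norm (prev_err k \<omega>))\<^sup>2) + ennreal (B / real b) = ennreal ((norm (prev_err k \<omega>))\<^sup>2 + B / real b)"
    using bpos B0 by (simp add: ennreal_plus)
  finally show ?thesis unfolding B_def .
qed

lemma nn_cond_exp_err_sq_le:
  "AE \<omega> in M. nn_cond_exp M (F k) (\<lambda>\<omega>. ennreal ((norm (err k \<omega>))\<^sup>2)) \<omega>
     \<le> ennreal ((1 - p) * (norm (prev_err k \<omega>))\<^sup>2 + 8 * (1 - p) * L\<^sup>2 / real b * (norm (x k \<omega> - x (k - 1) \<omega>))\<^sup>2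
          + 2 * (1 - p) * L\<^sup>2 / real b * (norm (x (k - 1) \<omega> - x (k - 2) \<omega>))\<^sup>2 + p * (\<sigma>k k)\<^sup>2)"
proof -
  have "(\<lambda>v::'e. ennreal ((norm v)\<^sup>2)) \<in> borel_measurable borel" by measurable
  from nn_cond_exp_err_mixture[OF this, of k] Sbar_var[of k] show ?thesis
  proof eventually_elim
    case (elim \<omega>)
    define R where "R = (norm (prev_err k \<omega>))\<^sup>2
      + (8 * L\<^sup>2 * (norm (x k \<omega> - x (k - 1) \<omega>))\<^sup>2 + 2 * L\<^sup>2 * (norm (x (k - 1) \<omega> - x (k - 2) \<omega>))\<^sup>2) / real b"
    have "0 \<le> R" unfolding R_def by simp
    have "nn_cond_exp M (F k) (\<lambda>\<omega>. ennreal ((norm (err k \<omega>))\<^sup>2)) \<omega>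
        \<le> ennreal p * ennreal ((\<sigma>k k)\<^sup>2) + ennreal (1 - p) * ennreal R"
      unfolding elim(1) R_def by (intro add_mono mult_left_mono elim(2) nn_integral_batch_err_le) auto
    also have "\<dots> = ennreal (p * (\<sigma>k k)\<^sup>2 + (1 - p) * R)"
      using p \<open>0 \<le> R\<close> by (simp add: ennreal_mult ennreal_plus)
    also have "p * (\<sigma>k k)\<^sup>2 + (1 - p) * R
        = (1 - p) * (norm (prev_err k \<omega>))\<^sup>2 + 8 * (1 - p) * L\<^sup>2 / real b * (norm (x k \<omega> - x (k - 1) \<omega>))\<^sup>2
          + 2 * (1 - p) * L\<^sup>2 / real b * (norm (x (k - 1) \<omega> - x (k - 2) \<omega>))\<^sup>2 + p * (\<sigma>k k)\<^sup>2"
      unfolding R_def using b by (simp add: field_simps)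
    finally show ?case .
  qed
qed

lemma integrable_refresh_err: "integrable M (\<lambda>\<omega>. Sbar k \<omega> - S k \<omega>)"
proof (rule integrable_if_norm_sq_finite)
  interpret Fk: finite_measure_subalgebra M "F k" by unfold_locales (rule F_subalgebra)
  show [measurable]: "(\<lambda>\<omega>. Sbar k \<omega> - S k \<omega>) \<in> borel_measurable M"
    using measurable_F_M[OF Sbar_measurable] measurable_F_M[OF S_measurable] by measurable
  have "(\<integral>\<^sup>+\<omega>. ennreal ((norm (Sbar k \<omega> - S k \<omega>))\<^sup>2) \<partial>M)
      = (\<integral>\<^sup>+\<omega>. nn_cond_exp M (F k) (\<lambda>\<omega>. ennreal ((norm (Sbar k \<omega> - S k \<omega>))\<^sup>2)) \<omega> \<partial>M)"
    using Fk.nn_cond_exp_intg[of "\<lambda>_. 1" "\<lambda>\<omega>. ennreal ((norm (Sbar k \<omega> - S k \<omega>))\<^sup>2)"] by simp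
  also have "\<dots> \<le> (\<integral>\<^sup>+\<omega>. ennreal ((\<sigma>k k)\<^sup>2) \<partial>M)"
    using Sbar_var[of k] by (intro nn_integral_mono_AE) auto
  also have "\<dots> < \<infinity>" by (simp add: emeasure_space_1)
  finally show "(\<integral>\<^sup>+\<omega>. ennreal ((norm (Sbar k \<omega> - S k \<omega>))\<^sup>2) \<partial>M) \<noteq> \<infinity>" by simp
qed

lemma real_cond_exp_refresh_err:
  assumes i: "i \<in> Basis"
  shows "AE \<omega> in M. real_cond_exp M (F k) (\<lambda>\<omega>. (Sbar k \<omega> - S k \<omega>) \<bullet> i) \<omega> = 0"
proof -
  interpret Fk: finite_measure_subalgebra M "F k" by unfold_locales (rule F_subalgebra)
  have S: "integrable M (\<lambda>\<omega>. S k \<omega> \<bullet> i)" using integrable_S[of k] by auto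
  have "integrable M (\<lambda>\<omega>. (Sbar k \<omega> - S k \<omega>) + S k \<omega>)"
    using integrable_refresh_err[of k] integrable_S[of k] by (rule Bochner_Integration.integrable_add)
  then have Sbar: "integrable M (\<lambda>\<omega>. Sbar k \<omega> \<bullet> i)" by auto
  have "(\<lambda>\<omega>. S k \<omega> \<bullet> i) \<in> borel_measurable (F k)" using S_measurable[of k] by measurable
  from Fk.real_cond_exp_diff[OF Sbar S] Fk.real_cond_exp_F_meas[OF S this] Sbar_mean[OF i, of k]
  show ?thesis by eventually_elim (simp add: inner_diff_left)
qed

lemma
  shows integrable_batch_err: "integrable batch_space (batch_err k \<omega>)"
    and integral_batch_err: "(\<integral>y. batch_err k \<omega> y \<partial>batch_space) = prev_err k \<omega>"
proof -
  interpret Q: prob_space batch_space by (intro prob_space_PiM) unfold_locales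
  define V where "V z = (1 / real b) *\<^sub>R centered_increment Gb G (x k \<omega>) (x (k - 1) \<omega>) (x (k - 2) \<omega>) z" for z
  have [measurable]: "V \<in> borel_measurable Pz" unfolding V_def by measurable
  have V: "integrable Pz V" and V0: "(\<integral>z. V z \<partial>Pz) = 0"
    unfolding V_def using centered_increment_integrable centered_increment_mean_zero by auto
  have "batch_err k \<omega> = (\<lambda>y. prev_err k \<omega> + (\<Sum>j<b. V (y j)))"
    by (simp add: batch_err_def V_def fun_eq_iff)
  then show "integrable batch_space (batch_err k \<omega>)"
    and "(\<integral>y. batch_err k \<omega> y \<partial>batch_space) = prev_err k \<omega>"
    using Pz.integrable_iid_sum[OF _ V] Pz.integral_iid_sum[OF _ V] by (simp_all add: V0 Q.prob_space)
qed

lemma real_cond_exp_err: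
  assumes i: "i \<in> Basis"
  shows "AE \<omega> in M. real_cond_exp M (F k) (\<lambda>\<omega>. err k \<omega> \<bullet> i) \<omega> = (1 - p) * (prev_err k \<omega> \<bullet> i)"
proof -
  interpret Fk: finite_measure_subalgebra M "F k" by unfold_locales (rule F_subalgebra)
  have "(\<lambda>v::'e. ennreal (v \<bullet> i)) \<in> borel_measurable borel" "(\<lambda>v::'e. ennreal (- (v \<bullet> i))) \<in> borel_measurable borel"
    by measurable
  from this[THEN nn_cond_exp_err_mixture]
  have "AE \<omega> in M. real_cond_exp M (F k) (\<lambda>\<omega>. err k \<omega> \<bullet> i) \<omega>
      = p * real_cond_exp M (F k) (\<lambda>\<omega>. (Sbar k \<omega> - S k \<omega>) \<bullet> i) \<omega> + (1 - p) * (\<integral>y. batch_err k \<omega> y \<bullet> i \<partial>batch_space)"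
    using p integrable_refresh_err[of k] integrable_batch_err[of k]
    by (intro Fk.real_cond_exp_mixture) auto
  with real_cond_exp_refresh_err[OF i, of k] show ?thesis
    by eventually_elim (simp add: integral_batch_err integrable_batch_err)
qed

theorem classB_err:
  "classB M F x err (\<lambda>k \<omega>. (norm (err k \<omega>))\<^sup>2)
     p p (8 * (1 - p) * L\<^sup>2 / real b) (2 * (1 - p) * L\<^sup>2 / real b) (\<lambda>k. p * (\<sigma>k k)\<^sup>2)"
proof -
  have prev: "(if k = 0 then 0 else err (k - 1) \<omega>) = prev_err k \<omega>"
    and prev_sq: "(if k = 0 then 0 else (norm (err (k - 1) \<omega>))\<^sup>2) = (norm (prev_err k \<omega>))\<^sup>2" for k \<omega>
    by (simp_all add: prev_err_def)
  have [measurable]: "err k \<in> borel_measurable M" for k by (rule measurable_F_M[OF err_measurable])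
  show ?thesis
    unfolding classB_def prev prev_sq
    using p real_cond_exp_err nn_cond_exp_err_sq_le by auto
qed

end

theorem mainTheorem7:
  fixes M :: "'w measure" and F :: "nat \<Rightarrow> 'w measure"
    and Pz :: "'z measure" and Gb :: "'e::euclidean_space \<Rightarrow> 'z \<Rightarrow> 'e" and G :: "'e \<Rightarrow> 'e"
    and \<sigma> L :: real
    and T :: "'e \<Rightarrow> 'e set" and \<eta> :: real and x0 :: 'e
    and x :: "nat \<Rightarrow> 'w \<Rightarrow> 'e"
    and p :: real and b :: nat
    and C :: "nat \<Rightarrow> 'w set" and \<zeta> :: "nat \<Rightarrow> nat \<Rightarrow> 'w \<Rightarrow> 'z"
    and Sbar :: "nat \<Rightarrow> 'w \<Rightarrow> 'e" and \<sigma>k :: "nat \<Rightarrow> real"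
  assumes M: "prob_space M"
    \<comment> \<open>setting (E): G x = E_zeta[G(x,zeta)]\<close>
    and Pz: "prob_space Pz"
    and Gb_meas: "(\<lambda>(y, z). Gb y z) \<in> borel_measurable (borel \<Otimes>\<^sub>M Pz)"
    and Gb_int: "\<And>y. integrable Pz (Gb y)"
    and G_def: "\<And>y. G y = (\<integral>z. Gb y z \<partial>Pz)"
    \<comment> \<open>Assumption A(b), A(c)\<close>
    and A_b: "\<And>y. (\<integral>\<^sup>+z. ennreal ((norm (Gb y z - G y))\<^sup>2) \<partial>Pz) \<le> ennreal (\<sigma>\<^sup>2)"
    and A_c: "\<And>y y'. (\<integral>\<^sup>+z. ennreal ((norm (Gb y z - Gb y' z))\<^sup>2) \<partial>Pz) \<le> ennreal (L\<^sup>2 * (norm (y - y'))\<^sup>2)"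
    \<comment> \<open>the scheme VrFRBS with this estimator\<close>
    and eta: "\<eta> > 0"
    and xi0: "T x0 \<noteq> {}"
    and x_0: "\<And>\<omega>. \<omega> \<in> space M \<Longrightarrow> x 0 \<omega> = x0"
    and x_step: "\<And>k \<omega>. \<omega> \<in> space M \<Longrightarrow>
        (1 / \<eta>) *\<^sub>R (x k \<omega> - \<eta> *\<^sub>R vr_est Gb G b x C \<zeta> Sbar k \<omega> - x (Suc k) \<omega>) \<in> T (x (Suc k) \<omega>)"
    \<comment> \<open>filtration: F k = randomness up to iteration k\<close>
    and F_sub: "\<And>k. subalgebra M (F k)"
    and F_mono: "\<And>k. sets (F k) \<subseteq> sets (F (Suc k))"
    and x_meas: "\<And>k. x k \<in> borel_measurable (F k)"
    and x_int: "\<And>k. integrable M (x k)"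
    and C_meas: "\<And>k. C k \<in> sets (F (Suc k))"
    and \<zeta>_meas: "\<And>k j. \<zeta> k j \<in> measurable (F (Suc k)) Pz"
    and Sbar_meas: "\<And>k. Sbar k \<in> borel_measurable (F (Suc k))"
    \<comment> \<open>parameters\<close>
    and p: "p \<in> {0<..1}" and b: "b \<ge> 1"
    \<comment> \<open>fresh i.i.d. mini-batch of size b, independent of the past\<close>
    and \<zeta>_distr: "\<And>k j. distr M Pz (\<zeta> k j) = Pz"
    and \<zeta>_indep: "\<And>k. prob_space.indep_sets M
        (\<lambda>i. case i of None \<Rightarrow> sets (F k)
                    | Some j \<Rightarrow> {\<zeta> k j -` A \<inter> space M | A. A \<in> sets Pz})
        (insert None (Some ` {..<b}))"
    \<comment> \<open>the coin: refresh with probability p, drawn independently of everything else\<close>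
    and C_prob: "\<And>k. measure M (C k) = p"
    and C_indep: "\<And>k. prob_space.indep_set M {C k}
        (sigma_sets (space M)
          (sets (F k) \<union> (\<Union>j<b. {\<zeta> k j -` A \<inter> space M | A. A \<in> sets Pz})
             \<union> {Sbar k -` A \<inter> space M | A. A \<in> sets borel}))"
    \<comment> \<open>E_k[Sbar^k] = S^k and E_k |Sbar^k - S^k|^2 \<le> sigma_k^2\<close>
    and Sbar_mean: "\<And>k i. i \<in> Basis \<Longrightarrow> AE \<omega> in M.
        real_cond_exp M (F k) (\<lambda>\<omega>. Sbar k \<omega> \<bullet> i) \<omega> = frb_S G x k \<omega> \<bullet> i"
    and Sbar_var: "\<And>k. AE \<omega> in M.
        nn_cond_exp M (F k) (\<lambda>\<omega>. ennreal ((norm (Sbar k \<omega> - frb_S G x k \<omega>))\<^sup>2)) \<omega> \<le> ennreal ((\<sigma>k k)\<^sup>2)"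
  shows "classB M F x
           (\<lambda>k \<omega>. vr_est Gb G b x C \<zeta> Sbar k \<omega> - frb_S G x k \<omega>)
           (\<lambda>k \<omega>. (norm (vr_est Gb G b x C \<zeta> Sbar k \<omega> - frb_S G x k \<omega>))\<^sup>2)
           p p (8 * (1 - p) * L\<^sup>2 / real b) (2 * (1 - p) * L\<^sup>2 / real b) (\<lambda>k. p * (\<sigma>k k)\<^sup>2)"
proof -
  \<comment> \<open>the hypotheses on \<open>T\<close>, \<open>\<eta>\<close>, \<open>x0\<close> and \<open>\<sigma>\<close> describe the surrounding scheme; the
    estimate holds for any adapted integrable iterates\<close>
  interpret loopless_estimator Pz Gb G L M F x p b C \<zeta> Sbar \<sigma>k
    using M Pz by (intro loopless_estimator.intro stochastic_oracle.intro stochastic_oracle_axioms.intro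
        loopless_estimator_axioms.intro) (use assms in auto)
  show ?thesis using classB_err unfolding err_def .
qed

end
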